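(* Let $k\ge4$ be even and let $G$ be a $k$-uniform hypergraph. Then the number of minimal canonical H-eigenvectors of the signless Laplacian tensor $\mathcal D+\mathcal A$ corresponding to the eigenvalue $0$, counted with $\mathbf x$ and $-\mathbf x$ identified, equals the number of odd-bipartite connected components of $G$ (counted with multiplicity as explained below).
   Context: A $k$-uniform hypergraph $G=(V,E)$ has vertex set $V=[n]$ ($n\ge k$) and nonempty edge set $E$ of $k$-element subsets; $E_i=\{e\in E:i\in e\}$, $d_i=|E_i|$. Connected components are maximal sets of vertices pairwise joined by chains of edges with consecutive edges intersecting; an isolated vertex (singleton) is also a connected component. $\mathcal A$: $a_{i_1\dots i_k}=\frac1{(k-1)!}$ if $\{i_1,\dots,i_k\}\in E$, else $0$; $\mathcal D$ diagonal with $d_{i\dots i}=d_i$; so $((\mathcal D+\mathcal A)\mathbf x^{k-1})_i=d_ix_i^{k-1}+\sum_{e\in E_i}\prod_{j\in e\setminus\{i\}}x_j$. A nonzero $\mathbf x\in\mathbb C^n$ is an eigenvector of $\mathcal T$ for eigenvalue $\lambda$ if $(\mathcal T\mathbf x^{k-1})_i=\lambda x_i^{k-1}$ for all $i$. An H-eigenvector is a real eigenvector. An eigenvector is canonical if $\max_i|x_i|=1$. An eigenvector $\mathbf x$ of eigenvalue $0$ is minimal if there is no eigenvector of eigenvalue $0$ whose support $\{i:y_i\neq0\}$ is strictly contained in that of $\mathbf x$. Counting of odd-bipartite connected components: each singleton component contributes $1$; each connected component $C$ with $|C|\ge2$ contributes the number of unordered partitions $\{S,T\}$ of $C$ with $S,T\neq\emptyset$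 such that $|e\cap S|$ is odd for every edge $e\subseteq C$ (a component with no such partition contributes $0$). The number of odd-bipartite connected components of $G$ is the sum of these contributions. *)

theory Defs
  imports Complex_Main
begin

definition k_uniform_hypergraph :: "nat \<Rightarrow> nat \<Rightarrow> nat set set \<Rightarrow> bool" where
  "k_uniform_hypergraph k n E \<longleftrightarrow> n \<ge> k \<and> E \<noteq> {} \<and>
     (\<forall>e\<in>E. e \<subseteq> {1..n} \<and> card e = k)"

definition edges_at :: "nat set set \<Rightarrow> nat \<Rightarrow> nat set set" where
  "edges_at E i = {e\<in>E. i \<in> e}"

definition degree :: "nat set set \<Rightarrow> nat \<Rightarrow> nat" where
  "degree E i = card (edges_at E i)"

text \<open>The i-th entry of (D + A) x^(k-1).\<close>
definition signless_lap_apply :: "nat \<Rightarrow> nat set set \<Rightarrow> (nat \<Rightarrow> complex) \<Rightarrow> nat \<Rightarrow> complex" where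
  "signless_lap_apply k E x i =
     of_nat (degree E i) * x i ^ (k - 1) + (\<Sum>e\<in>edges_at E i. \<Prod>j\<in>e - {i}. x j)"

definition is_vec :: "nat \<Rightarrow> (nat \<Rightarrow> complex) \<Rightarrow> bool" where
  "is_vec n x \<longleftrightarrow> (\<forall>i. i \<notin> {1..n} \<longrightarrow> x i = 0)"

definition slap_eigenvector :: "nat \<Rightarrow> nat \<Rightarrow> nat set set \<Rightarrow> complex \<Rightarrow> (nat \<Rightarrow> complex) \<Rightarrow> bool" where
  "slap_eigenvector k n E lam x \<longleftrightarrow> is_vec n x \<and> (\<exists>i\<in>{1..n}. x i \<noteq> 0) \<and>
     (\<forall>i\<in>{1..n}. signless_lap_apply k E x i = lam * x i ^ (k - 1))"

definition supp :: "nat \<Rightarrow> (nat \<Rightarrow> complex) \<Rightarrow> nat set" where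
  "supp n x = {i\<in>{1..n}. x i \<noteq> 0}"

definition is_real_vec :: "nat \<Rightarrow> (nat \<Rightarrow> complex) \<Rightarrow> bool" where
  "is_real_vec n x \<longleftrightarrow> (\<forall>i\<in>{1..n}. x i \<in> \<real>)"

definition canonical :: "nat \<Rightarrow> (nat \<Rightarrow> complex) \<Rightarrow> bool" where
  "canonical n x \<longleftrightarrow> Max ((\<lambda>i. cmod (x i)) ` {1..n}) = 1"

definition minimal_zero_eigenvector :: "nat \<Rightarrow> nat \<Rightarrow> nat set set \<Rightarrow> (nat \<Rightarrow> complex) \<Rightarrow> bool" where
  "minimal_zero_eigenvector k n E x \<longleftrightarrow> slap_eigenvector k n E 0 x \<and>
     \<not> (\<exists>y. slap_eigenvector k n E 0 y \<and> supp n y \<subset> supp n x)"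

definition min_canon_H_zero_eigvecs :: "nat \<Rightarrow> nat \<Rightarrow> nat set set \<Rightarrow> (nat \<Rightarrow> complex) set" where
  "min_canon_H_zero_eigvecs k n E =
     {x. minimal_zero_eigenvector k n E x \<and> is_real_vec n x \<and> canonical n x}"

text \<open>Connected components: classes of the reflexive-transitive closure of
  "lie in a common edge" on {1..n} (isolated vertices are singleton components).\<close>
definition hadj :: "nat set set \<Rightarrow> (nat \<times> nat) set" where
  "hadj E = {(i, j). \<exists>e\<in>E. i \<in> e \<and> j \<in> e}"

definition components :: "nat \<Rightarrow> nat set set \<Rightarrow> nat set set" where
  "components n E = {1..n} // ((hadj E)\<^sup>*)"

definition odd_bipartitions :: "nat set set \<Rightarrow> nat set \<Rightarrow> nat set set set" where
  "odd_bipartitions E C = {P. \<exists>S T. P = {S, T} \<and> S \<noteq> {} \<and> T \<noteq> {} \<and> S \<inter> T = {} \<and>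
      S \<union> T = C \<and> (\<forall>e\<in>E. e \<subseteq> C \<longrightarrow> odd (card (e \<inter> S)))}"

definition component_contribution :: "nat set set \<Rightarrow> nat set \<Rightarrow> nat" where
  "component_contribution E C = (if card C = 1 then 1 else card (odd_bipartitions E C))"

definition num_odd_bipartite_components :: "nat \<Rightarrow> nat set set \<Rightarrow> nat" where
  "num_odd_bipartite_components n E = (\<Sum>C\<in>components n E. component_contribution E C)"

end

theory Submission imports Defs begin

text \<open>
  Let y be a zero eigenvector and a a vertex at which |y| is maximal among the vertices of the
  edges through a. The a-th equation gives
  d_a |y_a|^(k-1) = |\<Sum>_{e\<ni>a} \<Prod>_{e-{a}} y| \<le> \<Sum>_{e\<ni>a} \<Prod>_{e-{a}} |y| \<le> d_a |y_a|^(k-1),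
  so all these inequalities are equalities and |y| is the same at every neighbour of a.
  Propagating along edges, |y| is constant on each component it meets; hence a minimal zero
  eigenvector is supported on exactly one component C, and a canonical real one is a \<plusminus>1
  vector on C. For even k, the \<plusminus>1 vector that is negative exactly on S \<subseteq> C is a zero
  eigenvector iff every edge in C meets S in an odd number of vertices, and x, -x correspond
  to S and C - S. So the pairs {x, -x} on C are the odd bipartitions {S, C - S} of C, except that
  an isolated vertex yields exactly one pair. The argument uses only that k is even and at
  least 2.
\<close>

lemma sum_eq_card_bound_imp_eq:
  fixes f :: "'a \<Rightarrow> real"
  assumes "finite A" and "\<forall>a\<in>A. f a \<le> B" and "real (card A) * B \<le> sum f A" and "a \<in> A"
  shows "f a = B"
proof -
  have nonneg: "\<forall>a\<in>A. 0 \<le> B - f a"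
    using assms(2) by simp
  then have "0 \<le> (\<Sum>a\<in>A. B - f a)"
    by (simp add: sum_nonneg)
  moreover have "(\<Sum>a\<in>A. B - f a) \<le> 0"
    using assms(3) by (simp add: sum_subtractf)
  ultimately have "(\<Sum>a\<in>A. B - f a) = 0"
    by linarith
  then show ?thesis
    using sum_nonneg_eq_0_iff[OF assms(1), of "\<lambda>a. B - f a"] nonneg assms(4) by simp
qed

lemma prod_eq_power_bound_imp_eq:
  fixes f :: "'a \<Rightarrow> real"
  assumes A: "finite A" and bounds: "\<forall>a\<in>A. 0 \<le> f a \<and> f a \<le> M"
    and prod: "prod f A = M ^ card A" and a: "a \<in> A"
  shows "f a = M"
proof (rule ccontr)
  assume "f a \<noteq> M"
  then have lt: "f a < M" and "0 < M" using bounds a by force+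
  have "prod f (A - {a}) \<le> (\<Prod>_\<in>A - {a}. M)"
    by (rule prod_mono) (use bounds in auto)
  then have "f a * prod f (A - {a}) \<le> f a * M ^ card (A - {a})"
    using bounds a by (intro mult_left_mono) auto
  also have "\<dots> < M * M ^ card (A - {a})"
    using lt \<open>0 < M\<close> by (intro mult_strict_right_mono) auto
  also have "\<dots> = M ^ card A"
    using card_Suc_Diff1[OF A a] by (metis power_Suc)
  finally show False
    using prod prod.remove[OF A a, of f] by linarith
qed

lemma prod_pm_one_eq_power_card:
  fixes x :: "'a \<Rightarrow> complex"
  assumes "finite A" and "\<forall>a\<in>A. x a = 1 \<or> x a = -1"
  shows "prod x A = (-1) ^ card {a\<in>A. x a = -1}"
  using assms
proof (induction A rule: finite_induct)
  case empty
  then show ?case by simp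
next
  case (insert a F)
  have fin: "finite {l\<in>F. x l = -1}" and notin: "a \<notin> {l\<in>F. x l = -1}"
    using insert(1,2) by simp_all
  show ?case
  proof (cases "x a = -1")
    case True
    then have "{l\<in>insert a F. x l = -1} = insert a {l\<in>F. x l = -1}" by auto
    then show ?thesis using insert fin notin True by simp
  next
    case False
    then have "{l\<in>insert a F. x l = -1} = {l\<in>F. x l = -1}" and "x a = 1" using insert(4) by auto
    then show ?thesis using insert by simp
  qed
qed

lemma Reals_norm_eq_1_cases:
  fixes z :: complex
  assumes "z \<in> \<real>" and "cmod z = 1"
  shows "z = 1 \<or> z = -1"
proof -
  obtain r where "z = of_real r" using assms(1) by (auto elim: Reals_cases)
  moreover have "\<bar>r\<bar> = 1" using assms(2) calculation by simp
  ultimately show ?thesis by (auto simp: abs_if split: if_splits)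
qed

definition sign_vector :: "nat set \<Rightarrow> nat set \<Rightarrow> nat \<Rightarrow> complex" where
  "sign_vector C S l = (if l \<in> S then -1 else if l \<in> C then 1 else 0)"

lemma sign_vector_pm_one: "l \<in> C \<Longrightarrow> sign_vector C S l = 1 \<or> sign_vector C S l = -1"
  unfolding sign_vector_def by auto

lemma sign_vector_eq_minus_one_iff: "S \<subseteq> C \<Longrightarrow> sign_vector C S l = -1 \<longleftrightarrow> l \<in> S"
  unfolding sign_vector_def by auto

lemma sign_vector_eq_0_iff: "S \<subseteq> C \<Longrightarrow> sign_vector C S l = 0 \<longleftrightarrow> l \<notin> C"
  unfolding sign_vector_def by auto

lemma uminus_sign_vector: "S \<subseteq> C \<Longrightarrow> - sign_vector C S = sign_vector C (C - S)"
  unfolding sign_vector_def by (rule ext) auto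

lemma inj_on_sign_vector: "inj_on (sign_vector C) (Pow C)"
proof (rule inj_onI)
  fix S S' assume "S \<in> Pow C" "S' \<in> Pow C" and eq: "sign_vector C S = sign_vector C S'"
  then have "l \<in> S \<longleftrightarrow> l \<in> S'" for l
    using sign_vector_eq_minus_one_iff[of S C l] sign_vector_eq_minus_one_iff[of S' C l] by auto
  then show "S = S'" by blast
qed

definition odd_bipartition_side :: "nat set set \<Rightarrow> nat set \<Rightarrow> nat set \<Rightarrow> bool" where
  "odd_bipartition_side E C S \<longleftrightarrow> S \<subseteq> C \<and> (\<forall>e\<in>E. e \<subseteq> C \<longrightarrow> odd (card (e \<inter> S)))"

lemma odd_bipartitions_eq_image:
  "odd_bipartitions E C =
     (\<lambda>S. {S, C - S}) ` {S. odd_bipartition_side E C S \<and> S \<noteq> {} \<and> S \<noteq> C}"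
proof (intro equalityI subsetI)
  fix P assume "P \<in> odd_bipartitions E C"
  then obtain S T where P: "P = {S, T}" and "S \<noteq> {}" "T \<noteq> {}" "S \<inter> T = {}" "S \<union> T = C"
    and odd: "\<forall>e\<in>E. e \<subseteq> C \<longrightarrow> odd (card (e \<inter> S))"
    unfolding odd_bipartitions_def by blast
  then have "T = C - S" "S \<subseteq> C" "S \<noteq> C" by auto
  then show "P \<in> (\<lambda>S. {S, C - S}) ` {S. odd_bipartition_side E C S \<and> S \<noteq> {} \<and> S \<noteq> C}"
    using P odd \<open>S \<noteq> {}\<close> by (auto simp: odd_bipartition_side_def)
next
  fix P assume "P \<in> (\<lambda>S. {S, C - S}) ` {S. odd_bipartition_side E C S \<and> S \<noteq> {} \<and> S \<noteq> C}"
  then obtain S where "P = {S, C - S}" "odd_bipartition_side E C S" "S \<noteq> {}" "S \<noteq> C"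
    by blast
  moreover from this have "C - S \<noteq> {}" "S \<union> (C - S) = C"
    by (auto simp: odd_bipartition_side_def)
  ultimately show "P \<in> odd_bipartitions E C"
    unfolding odd_bipartitions_def odd_bipartition_side_def by blast
qed

lemma inj_on_image_sign_vector: "inj_on (\<lambda>P. sign_vector C ` P) (odd_bipartitions E C)"
proof (rule inj_onI)
  fix P P' assume "P \<in> odd_bipartitions E C" "P' \<in> odd_bipartitions E C"
    and eq: "sign_vector C ` P = sign_vector C ` P'"
  then have "P \<subseteq> Pow C" "P' \<subseteq> Pow C"
    by (auto simp: odd_bipartitions_def)
  with eq show "P = P'"
    using inj_on_image_eq_iff[OF inj_on_sign_vector] by metis
qed

locale uniform_hypergraph =
  fixes k n :: nat and E :: "nat set set"
  assumes uniform: "k_uniform_hypergraph k n E" and two_le_k: "2 \<le> k"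
begin

lemma edge_subset: "e \<in> E \<Longrightarrow> e \<subseteq> {1..n}"
  using uniform by (auto simp: k_uniform_hypergraph_def)

lemma card_edge: "e \<in> E \<Longrightarrow> card e = k"
  using uniform by (auto simp: k_uniform_hypergraph_def)

lemma finite_edge: "e \<in> E \<Longrightarrow> finite e"
  using card_edge two_le_k card.infinite by fastforce

lemma finite_edges_at: "finite (edges_at E a)"
proof -
  have "E \<subseteq> Pow {1..n}" using edge_subset by auto
  then show ?thesis unfolding edges_at_def by (auto intro: finite_subset)
qed

lemma card_edge_minus: "e \<in> edges_at E a \<Longrightarrow> card (e - {a}) = k - 1"
  by (simp add: edges_at_def card_edge finite_edge)

lemma edge_minus_nonempty:
  assumes "e \<in> edges_at E a"
  shows "e - {a} \<noteq> {}"
proof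
  assume "e - {a} = {}"
  with card_edge_minus[OF assms] two_le_k show False by simp
qed

abbreviation component_of :: "nat \<Rightarrow> nat set" where
  "component_of i \<equiv> (hadj E)\<^sup>* `` {i}"

lemma components_eq_image: "components n E = component_of ` {1..n}"
  by (auto simp: components_def quotient_def)

lemma component_of_eq: "j \<in> component_of i \<Longrightarrow> component_of j = component_of i"
proof -
  have "sym ((hadj E)\<^sup>*)" by (rule sym_rtrancl) (auto simp: sym_def hadj_def)
  then show "j \<in> component_of i \<Longrightarrow> component_of j = component_of i"
    by (auto intro: rtrancl_trans dest: symD)
qed

lemma component_of_subset: "i \<in> {1..n} \<Longrightarrow> component_of i \<subseteq> {1..n}"
proof
  fix j assume "i \<in> {1..n}" "j \<in> component_of i"
  then have "(i, j) \<in> (hadj E)\<^sup>*" by simp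
  then show "j \<in> {1..n}"
  proof induction
    case (step j l)
    then obtain e where "e \<in> E" "l \<in> e" by (auto simp: hadj_def)
    then show ?case using edge_subset by blast
  qed (use \<open>i \<in> {1..n}\<close> in simp)
qed

lemma finite_component: "C \<in> components n E \<Longrightarrow> finite C"
  using component_of_subset finite_subset by (fastforce simp: components_eq_image)

lemma edge_subset_component_of:
  "b \<in> component_of i \<Longrightarrow> e \<in> edges_at E b \<Longrightarrow> e \<subseteq> component_of i"
  by (auto simp: edges_at_def hadj_def intro: rtrancl_into_rtrancl)

lemma edge_disjoint_component_of:
  assumes "l \<notin> component_of i" and "e \<in> edges_at E l"
  shows "e \<inter> component_of i = {}"
proof (rule ccontr)
  assume "e \<inter> component_of i \<noteq> {}"
  then obtain m where "m \<in> e" "m \<in> component_of i" by auto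
  then have "e \<subseteq> component_of i"
    using assms(2) edge_subset_component_of[of m i e] by (auto simp: edges_at_def)
  then show False using assms by (auto simp: edges_at_def)
qed

lemma signless_lap_apply_cong_component_of:
  assumes "b \<in> component_of i" and "\<forall>l\<in>component_of i. x l = y l"
  shows "signless_lap_apply k E x b = signless_lap_apply k E y b"
  unfolding signless_lap_apply_def using assms edge_subset_component_of[OF assms(1)]
  by (auto intro!: sum.cong prod.cong)

lemma signless_lap_apply_outside_component_of:
  assumes "l \<notin> component_of i" and "\<forall>m. m \<notin> component_of i \<longrightarrow> x m = 0"
  shows "signless_lap_apply k E x l = 0"
proof -
  have "(\<Prod>j\<in>e - {l}. x j) = 0" if e: "e \<in> edges_at E l" for e
  proof -
    obtain m where "m \<in> e - {l}" using edge_minus_nonempty[OF e] by blast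
    moreover have "x m = 0"
      using calculation edge_disjoint_component_of[OF assms(1) e] assms(2) by blast
    ultimately show ?thesis
      using e finite_edge by (auto simp: edges_at_def intro: prod_zero)
  qed
  then show ?thesis
    using assms two_le_k by (simp add: signless_lap_apply_def)
qed

lemma signless_lap_zero_norm_max_propagates:
  fixes y :: "nat \<Rightarrow> complex"
  assumes zero: "signless_lap_apply k E y a = 0"
    and le: "\<forall>e\<in>edges_at E a. \<forall>l\<in>e. cmod (y l) \<le> M" and ya: "cmod (y a) = M"
    and e: "e \<in> edges_at E a" and l: "l \<in> e"
  shows "cmod (y l) = M"
proof -
  define P where "P e = (\<Prod>j\<in>e - {a}. cmod (y j))" for e
  have bounds: "\<forall>j\<in>e - {a}. 0 \<le> cmod (y j) \<and> cmod (y j) \<le> M" if "e \<in> edges_at E a" for e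
    using le that by simp
  have P_le: "P e \<le> M ^ (k - 1)" if "e \<in> edges_at E a" for e
    using prod_mono[of "e - {a}" "\<lambda>j. cmod (y j)" "\<lambda>_. M"] bounds[OF that]
      card_edge_minus[OF that] by (simp add: P_def)
  have "real (degree E a) * M ^ (k - 1) = cmod (of_nat (degree E a) * y a ^ (k - 1))"
    using ya by (simp add: norm_mult norm_power)
  also have "\<dots> = cmod (\<Sum>e\<in>edges_at E a. \<Prod>j\<in>e - {a}. y j)"
    using zero by (simp add: signless_lap_apply_def add_eq_0_iff2 norm_minus_cancel)
  also have "\<dots> \<le> (\<Sum>e\<in>edges_at E a. P e)"
    unfolding P_def by (rule order_trans[OF norm_sum]) (simp add: prod_norm)
  finally have "P e = M ^ (k - 1)"
    using sum_eq_card_bound_imp_eq[OF finite_edges_at _ _ e] P_le by (simp add: degree_def)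
  then show ?thesis
    using prod_eq_power_bound_imp_eq[of "e - {a}" "\<lambda>j. cmod (y j)" M l] bounds[OF e]
      card_edge_minus[OF e] e l ya finite_edge
    by (cases "l = a") (auto simp: P_def edges_at_def)
qed

lemma zero_eigenvector_norm_const_on_component_of:
  fixes y :: "nat \<Rightarrow> complex"
  assumes zero: "\<forall>l\<in>{1..n}. signless_lap_apply k E y l = 0"
    and i: "i \<in> {1..n}" and "y i \<noteq> 0"
  shows "\<exists>M>0. \<forall>l\<in>component_of i. cmod (y l) = M"
proof -
  let ?C = "component_of i"
  have fin: "finite ?C" using component_of_subset[OF i] finite_subset by blast
  define M where "M = Max ((\<lambda>l. cmod (y l)) ` ?C)"
  have M_ge: "\<forall>l\<in>?C. cmod (y l) \<le> M" unfolding M_def using fin by simp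
  have "M \<in> (\<lambda>l. cmod (y l)) ` ?C" unfolding M_def using fin by (intro Max_in) auto
  then obtain j where j: "j \<in> ?C" "cmod (y j) = M" by blast
  have C_eq: "component_of j = ?C" using component_of_eq[OF j(1)] .
  have "cmod (y l) = M" if "(j, l) \<in> (hadj E)\<^sup>*" for l
    using that
  proof (induction rule: rtrancl_induct)
    case base
    then show ?case using j by simp
  next
    case (step a b)
    have "a \<in> component_of j" using step.hyps(1) by simp
    then have a: "a \<in> ?C" using C_eq by simp
    then have "a \<in> {1..n}" using component_of_subset[OF i] by blast
    then have "signless_lap_apply k E y a = 0" using zero by blast
    moreover have "\<forall>e\<in>edges_at E a. \<forall>l\<in>e. cmod (y l) \<le> M"
      using M_ge edge_subset_component_of[OF a] by blast
    moreover obtain e where "e \<in> edges_at E a" "b \<in> e"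
      using step.hyps(2) by (auto simp: hadj_def edges_at_def)
    ultimately show ?case
      using signless_lap_zero_norm_max_propagates step.IH by blast
  qed
  then have M: "\<forall>l\<in>?C. cmod (y l) = M" using C_eq by auto
  then have "M > 0" using \<open>y i \<noteq> 0\<close> by force
  with M show ?thesis by blast
qed

lemma zero_eigenvector_supp_component_of:
  assumes "slap_eigenvector k n E 0 y" and i: "i \<in> {1..n}" and "supp n y \<subseteq> component_of i"
  shows "supp n y = component_of i"
proof -
  obtain j where j: "j \<in> {1..n}" "y j \<noteq> 0"
    using assms(1) by (auto simp: slap_eigenvector_def)
  then have "component_of j = component_of i"
    using assms(3) component_of_eq by (auto simp: supp_def)
  moreover obtain M where "M > 0" "\<forall>l\<in>component_of j. cmod (y l) = M"
    using zero_eigenvector_norm_const_on_component_of[of y j] assms(1) j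
    by (auto simp: slap_eigenvector_def)
  ultimately show ?thesis
    using assms(3) component_of_subset[OF i] by (force simp: supp_def)
qed

lemma zero_eigenvector_restrict_component_of:
  assumes "slap_eigenvector k n E 0 x" and i: "i \<in> {1..n}" "x i \<noteq> 0"
  shows "slap_eigenvector k n E 0 (\<lambda>l. if l \<in> component_of i then x l else 0)"
    (is "slap_eigenvector k n E 0 ?y")
proof -
  have "signless_lap_apply k E ?y l = 0" if "l \<in> {1..n}" for l
  proof (cases "l \<in> component_of i")
    case True
    then have "signless_lap_apply k E ?y l = signless_lap_apply k E x l"
      by (intro signless_lap_apply_cong_component_of) auto
    then show ?thesis using assms(1) that by (simp add: slap_eigenvector_def)
  next
    case False
    then show ?thesis by (intro signless_lap_apply_outside_component_of) auto
  qed
  then show ?thesis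
    using i component_of_subset[OF i(1)] by (auto simp: slap_eigenvector_def is_vec_def)
qed

lemma minimal_zero_eigenvector_iff:
  "minimal_zero_eigenvector k n E x \<longleftrightarrow>
     slap_eigenvector k n E 0 x \<and> (\<exists>i\<in>{1..n}. supp n x = component_of i)"
proof
  assume min: "minimal_zero_eigenvector k n E x"
  then have eig: "slap_eigenvector k n E 0 x" by (simp add: minimal_zero_eigenvector_def)
  then obtain i where i: "i \<in> {1..n}" "x i \<noteq> 0" by (auto simp: slap_eigenvector_def)
  let ?y = "\<lambda>l. if l \<in> component_of i then x l else 0"
  have "slap_eigenvector k n E 0 ?y"
    using zero_eigenvector_restrict_component_of[OF eig i] .
  moreover from this have "supp n ?y = component_of i"
    using i(1) by (intro zero_eigenvector_supp_component_of) (auto simp: supp_def)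
  moreover have "supp n ?y \<subseteq> supp n x" by (auto simp: supp_def)
  ultimately show "slap_eigenvector k n E 0 x \<and> (\<exists>i\<in>{1..n}. supp n x = component_of i)"
    using min eig i(1) unfolding minimal_zero_eigenvector_def by blast
next
  assume "slap_eigenvector k n E 0 x \<and> (\<exists>i\<in>{1..n}. supp n x = component_of i)"
  then show "minimal_zero_eigenvector k n E x"
    unfolding minimal_zero_eigenvector_def
    using zero_eigenvector_supp_component_of by blast
qed

lemma supp_sign_vector:
  assumes "i \<in> {1..n}" and "S \<subseteq> component_of i"
  shows "supp n (sign_vector (component_of i) S) = component_of i"
  unfolding supp_def using component_of_subset[OF assms(1)] sign_vector_eq_0_iff[OF assms(2)]
  by blast

lemma canonical_sign_vector:
  assumes "i \<in> {1..n}"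
  shows "canonical n (sign_vector (component_of i) S)"
  unfolding canonical_def
proof (rule Max_eqI)
  show "1 \<in> (\<lambda>l. cmod (sign_vector (component_of i) S l)) ` {1..n}"
    using assms sign_vector_pm_one[of i "component_of i" S] by force
qed (auto simp: sign_vector_def)

lemma canonical_real_eq_sign_vector:
  assumes eig: "slap_eigenvector k n E 0 x" and i: "i \<in> {1..n}" and supp: "supp n x = component_of i"
    and "is_real_vec n x" and "canonical n x"
  shows "x = sign_vector (component_of i) {l\<in>component_of i. x l = -1}"
proof -
  let ?C = "component_of i"
  have out: "x l = 0" if "l \<notin> ?C" for l
    using that eig supp by (cases "l \<in> {1..n}") (auto simp: supp_def slap_eigenvector_def is_vec_def)
  have "x i \<noteq> 0" using supp i by (auto simp: supp_def)
  then obtain M where "M > 0" and M: "\<forall>l\<in>?C. cmod (x l) = M"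
    using zero_eigenvector_norm_const_on_component_of[of x i] i eig
    by (auto simp: slap_eigenvector_def)
  have "Max ((\<lambda>l. cmod (x l)) ` {1..n}) = M"
  proof (rule Max_eqI)
    show "M \<in> (\<lambda>l. cmod (x l)) ` {1..n}" using M i by force
  next
    fix r assume "r \<in> (\<lambda>l. cmod (x l)) ` {1..n}"
    then obtain l where "r = cmod (x l)" by blast
    then show "r \<le> M" using M out \<open>M > 0\<close> by (cases "l \<in> ?C") auto
  qed simp
  then have "\<forall>l\<in>?C. cmod (x l) = 1" using M \<open>canonical n x\<close> by (simp add: canonical_def)
  then have "\<forall>l\<in>?C. x l = 1 \<or> x l = -1"
    using \<open>is_real_vec n x\<close> component_of_subset[OF i] Reals_norm_eq_1_cases
    by (force simp: is_real_vec_def)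
  then show ?thesis using out by (intro ext) (auto simp: sign_vector_def)
qed

end

locale even_uniform_hypergraph = uniform_hypergraph +
  assumes even_k: "even k"
begin

text \<open>Multiplying the a-th equation by x_a turns the edge term of e into
  \<Prod>_{j\<in>e} x_j = (-1)^|e \<inter> S| and the degree term into d_a x_a^k = d_a, so every edge through a
  contributes 2 or 0 according to the parity of |e \<inter> S|.\<close>

lemma sign_vector_times_signless_lap_apply:
  assumes i: "a \<in> component_of i" and S: "S \<subseteq> component_of i"
  defines "x \<equiv> sign_vector (component_of i) S"
  shows "x a * signless_lap_apply k E x a =
           of_nat (\<Sum>e\<in>edges_at E a. if even (card (e \<inter> S)) then 2 else 0)"
proof -
  have pm: "\<forall>l\<in>component_of i. x l = 1 \<or> x l = -1"
    unfolding x_def using sign_vector_pm_one by blast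
  have "x a * x a ^ (k - 1) = x a ^ k"
    using two_le_k by (cases k) auto
  also have "\<dots> = 1"
    using bspec[OF pm i] even_k by auto
  finally have "x a * x a ^ (k - 1) = 1" .
  moreover have "x a * (\<Prod>j\<in>e - {a}. x j) = (-1) ^ card (e \<inter> S)" if e: "e \<in> edges_at E a" for e
  proof -
    have e_sub: "e \<subseteq> component_of i" using edge_subset_component_of[OF i e] .
    have fin: "finite e" and "a \<in> e" using e finite_edge by (auto simp: edges_at_def)
    then have "x a * (\<Prod>j\<in>e - {a}. x j) = prod x e"
      by (simp add: prod.remove)
    also have "\<dots> = (-1) ^ card {l\<in>e. x l = -1}"
      using fin e_sub pm by (intro prod_pm_one_eq_power_card) auto
    also have "{l\<in>e. x l = -1} = e \<inter> S"
      using e_sub S sign_vector_eq_minus_one_iff by (auto simp: x_def)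
    finally show ?thesis .
  qed
  ultimately have "x a * signless_lap_apply k E x a =
      (\<Sum>e\<in>edges_at E a. 1 + (-1) ^ card (e \<inter> S))"
    by (simp add: signless_lap_apply_def degree_def distrib_left sum_distrib_left sum.distrib
        mult.assoc mult.left_commute[of "x a"])
  also have "\<dots> = (\<Sum>e\<in>edges_at E a. of_nat (if even (card (e \<inter> S)) then 2 else 0))"
    by (rule sum.cong) auto
  finally show ?thesis by simp
qed

lemma signless_lap_apply_sign_vector_eq_0_iff:
  assumes "a \<in> component_of i" and "S \<subseteq> component_of i"
  shows "signless_lap_apply k E (sign_vector (component_of i) S) a = 0 \<longleftrightarrow>
           (\<forall>e\<in>edges_at E a. odd (card (e \<inter> S)))"
proof -
  let ?x = "sign_vector (component_of i) S"
  have "?x a \<noteq> 0"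
    using assms sign_vector_eq_0_iff by blast
  then have "signless_lap_apply k E ?x a = 0 \<longleftrightarrow> ?x a * signless_lap_apply k E ?x a = 0"
    by simp
  also have "\<dots> \<longleftrightarrow> (\<Sum>e\<in>edges_at E a. if even (card (e \<inter> S)) then 2 else 0 :: nat) = 0"
    unfolding sign_vector_times_signless_lap_apply[OF assms] of_nat_eq_0_iff ..
  also have "\<dots> \<longleftrightarrow> (\<forall>e\<in>edges_at E a. odd (card (e \<inter> S)))"
    using finite_edges_at by simp
  finally show ?thesis .
qed

lemma sign_vector_zero_eigenvector_iff:
  assumes i: "i \<in> {1..n}" and S: "S \<subseteq> component_of i"
  shows "slap_eigenvector k n E 0 (sign_vector (component_of i) S) \<longleftrightarrow>
           odd_bipartition_side E (component_of i) S"
    (is "slap_eigenvector k n E 0 ?x \<longleftrightarrow> _")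
proof -
  have outside: "\<forall>m. m \<notin> component_of i \<longrightarrow> ?x m = 0"
    using sign_vector_eq_0_iff[OF S] by blast
  have "slap_eigenvector k n E 0 ?x \<longleftrightarrow> (\<forall>l\<in>component_of i. signless_lap_apply k E ?x l = 0)"
  proof -
    have "is_vec n ?x"
      unfolding is_vec_def using component_of_subset[OF i] outside by blast
    moreover have "?x i \<noteq> 0"
      using sign_vector_eq_0_iff[OF S, of i] by simp
    moreover have "(\<forall>l\<in>{1..n}. signless_lap_apply k E ?x l = 0) \<longleftrightarrow>
        (\<forall>l\<in>component_of i. signless_lap_apply k E ?x l = 0)"
      using signless_lap_apply_outside_component_of[OF _ outside] component_of_subset[OF i] by blast
    ultimately show ?thesis
      using i by (auto simp: slap_eigenvector_def)
  qed
  also have "\<dots> \<longleftrightarrow> (\<forall>l\<in>component_of i. \<forall>e\<in>edges_at E l. odd (card (e \<inter> S)))"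
    by (intro ball_cong refl signless_lap_apply_sign_vector_eq_0_iff[OF _ S])
  also have "\<dots> \<longleftrightarrow> odd_bipartition_side E (component_of i) S"
  proof
    assume odd_at: "\<forall>l\<in>component_of i. \<forall>e\<in>edges_at E l. odd (card (e \<inter> S))"
    show "odd_bipartition_side E (component_of i) S"
      unfolding odd_bipartition_side_def
    proof (intro conjI ballI impI S)
      fix e assume e: "e \<in> E" "e \<subseteq> component_of i"
      obtain l where l: "l \<in> e"
        using card_edge[OF e(1)] two_le_k by (cases "e = {}") auto
      have "e \<in> edges_at E l" using e(1) l by (simp add: edges_at_def)
      moreover have "l \<in> component_of i" using e(2) l by blast
      ultimately show "odd (card (e \<inter> S))" using odd_at by blast
    qed
  next
    assume side: "odd_bipartition_side E (component_of i) S"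
    show "\<forall>l\<in>component_of i. \<forall>e\<in>edges_at E l. odd (card (e \<inter> S))"
    proof (intro ballI)
      fix l e assume "l \<in> component_of i" "e \<in> edges_at E l"
      then have "e \<in> E" "e \<subseteq> component_of i"
        using edge_subset_component_of by (auto simp: edges_at_def)
      then show "odd (card (e \<inter> S))" using side by (simp add: odd_bipartition_side_def)
    qed
  qed
  finally show ?thesis .
qed

lemma min_canon_H_zero_eigvecs_eq:
  "min_canon_H_zero_eigvecs k n E =
     (\<Union>C\<in>components n E. sign_vector C ` {S. odd_bipartition_side E C S})"
proof (intro equalityI subsetI)
  fix x assume "x \<in> min_canon_H_zero_eigvecs k n E"
  then have min: "minimal_zero_eigenvector k n E x" and "is_real_vec n x" "canonical n x"
    by (simp_all add: min_canon_H_zero_eigvecs_def)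
  then obtain i where i: "i \<in> {1..n}" and eig: "slap_eigenvector k n E 0 x"
    and "supp n x = component_of i"
    using minimal_zero_eigenvector_iff by blast
  define S where "S = {l\<in>component_of i. x l = -1}"
  have x: "x = sign_vector (component_of i) S"
    unfolding S_def by (rule canonical_real_eq_sign_vector) fact+
  have "S \<subseteq> component_of i" by (auto simp: S_def)
  then have "odd_bipartition_side E (component_of i) S"
    using sign_vector_zero_eigenvector_iff[OF i] eig x by simp
  then show "x \<in> (\<Union>C\<in>components n E. sign_vector C ` {S. odd_bipartition_side E C S})"
    unfolding components_eq_image using i x by blast
next
  fix x assume "x \<in> (\<Union>C\<in>components n E. sign_vector C ` {S. odd_bipartition_side E C S})"
  then obtain i S where i: "i \<in> {1..n}" and side: "odd_bipartition_side E (component_of i) S"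
    and x: "x = sign_vector (component_of i) S"
    unfolding components_eq_image by blast
  have S: "S \<subseteq> component_of i" using side by (simp add: odd_bipartition_side_def)
  have "minimal_zero_eigenvector k n E x"
    unfolding minimal_zero_eigenvector_iff x
    using sign_vector_zero_eigenvector_iff[OF i S] side supp_sign_vector[OF i S] i by blast
  moreover have "is_real_vec n x"
    by (simp add: x is_real_vec_def sign_vector_def)
  ultimately show "x \<in> min_canon_H_zero_eigvecs k n E"
    using canonical_sign_vector[OF i] by (simp add: min_canon_H_zero_eigvecs_def x)
qed

definition sign_pairs :: "nat set \<Rightarrow> (nat \<Rightarrow> complex) set set" where
  "sign_pairs C = (\<lambda>S. sign_vector C ` {S, C - S}) ` {S. odd_bipartition_side E C S}"

lemma finite_sign_pairs: "finite C \<Longrightarrow> finite (sign_pairs C)"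
  unfolding sign_pairs_def
  by (rule finite_imageI, rule finite_subset[of _ "Pow C"]) (auto simp: odd_bipartition_side_def)

lemma pairs_min_canon_H_zero_eigvecs_eq:
  "(\<lambda>x. {x, - x}) ` min_canon_H_zero_eigvecs k n E = (\<Union>C\<in>components n E. sign_pairs C)"
  unfolding min_canon_H_zero_eigvecs_eq sign_pairs_def image_UN image_image
  by (intro SUP_cong refl image_cong) (simp add: odd_bipartition_side_def uminus_sign_vector)

lemma sign_pairs_disjoint:
  assumes "C \<in> components n E" "C' \<in> components n E" "C \<noteq> C'"
  shows "sign_pairs C \<inter> sign_pairs C' = {}"
proof -
  have supp: "{l. x l \<noteq> 0} = C" if "p \<in> sign_pairs C" "x \<in> p" for C p x
    using that sign_vector_eq_0_iff[of _ C]
    by (auto simp: sign_pairs_def odd_bipartition_side_def)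
  show ?thesis
  proof (intro equals0I)
    fix p assume p: "p \<in> sign_pairs C \<inter> sign_pairs C'"
    then obtain x where "x \<in> p" by (auto simp: sign_pairs_def)
    then show False using p supp assms(3) by blast
  qed
qed

text \<open>An edge inside \<open>C\<close> has even size, so it meets neither \<open>{}\<close> nor \<open>C\<close> oddly.\<close>

lemma sign_pairs_eq_image_odd_bipartitions:
  assumes e: "e \<in> E" "e \<subseteq> C"
  shows "sign_pairs C = (\<lambda>P. sign_vector C ` P) ` odd_bipartitions E C"
proof -
  have "S \<noteq> {} \<and> S \<noteq> C" if "odd_bipartition_side E C S" for S
  proof -
    have "odd (card (e \<inter> S))" using that e by (simp add: odd_bipartition_side_def)
    moreover have "even (card (e \<inter> C))"
      using e card_edge even_k by (simp add: Int_absorb2)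
    ultimately show ?thesis by auto
  qed
  then have "{S. odd_bipartition_side E C S \<and> S \<noteq> {} \<and> S \<noteq> C} = {S. odd_bipartition_side E C S}"
    by blast
  then show ?thesis
    unfolding sign_pairs_def odd_bipartitions_eq_image image_image by simp
qed

lemma card_sign_pairs:
  assumes "C \<in> components n E"
  shows "card (sign_pairs C) = component_contribution E C"
proof -
  obtain i where i: "i \<in> {1..n}" and C: "C = component_of i"
    using assms by (auto simp: components_eq_image)
  show ?thesis
  proof (cases "\<exists>e\<in>E. i \<in> e")
    case False
    have "j = i" if "(i, j) \<in> (hadj E)\<^sup>*" for j
      using that False by (cases rule: converse_rtranclE) (auto simp: hadj_def)
    then have C_eq: "C = {i}" using C by auto
    have "\<not> e \<subseteq> C" if "e \<in> E" for e
      using card_edge[OF that] card_mono[of C e] two_le_k C_eq by auto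
    then have "{S. odd_bipartition_side E C S} = {{}, C}"
      using C_eq by (auto simp: odd_bipartition_side_def subset_singleton_iff)
    then show ?thesis
      using C_eq by (simp add: sign_pairs_def component_contribution_def insert_commute)
  next
    case True
    then obtain e where e: "e \<in> E" "i \<in> e" by blast
    then have e_sub: "e \<subseteq> C"
      using C edge_subset_component_of[of i i e] by (simp add: edges_at_def)
    have "card C \<noteq> 1"
      using card_mono[OF finite_component[OF assms] e_sub] card_edge[OF e(1)] two_le_k by auto
    then show ?thesis
      using sign_pairs_eq_image_odd_bipartitions[OF e(1) e_sub] inj_on_image_sign_vector
      by (simp add: component_contribution_def card_image)
  qed
qed

end

theorem proposition5p1:
  fixes k n :: nat and E :: "nat set set"
  assumes "k \<ge> 4" and "even k" and "k_uniform_hypergraph k n E"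
  shows "finite ((\<lambda>x. {x, - x}) ` min_canon_H_zero_eigvecs k n E) \<and>
         card ((\<lambda>x. {x, - x}) ` min_canon_H_zero_eigvecs k n E) = num_odd_bipartite_components n E"
proof -
  interpret even_uniform_hypergraph k n E
    using assms by unfold_locales auto
  have fin_comps: "finite (components n E)"
    by (simp add: components_eq_image)
  have fin_pairs: "finite (sign_pairs C)" if "C \<in> components n E" for C
    using finite_sign_pairs[OF finite_component[OF that]] .
  have "card (\<Union>C\<in>components n E. sign_pairs C) = (\<Sum>C\<in>components n E. card (sign_pairs C))"
    using fin_comps fin_pairs sign_pairs_disjoint by (intro card_UN_disjoint) auto
  also have "\<dots> = num_odd_bipartite_components n E"
    unfolding num_odd_bipartite_components_def using card_sign_pairs by simp
  finally show ?thesis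
    using fin_comps fin_pairs by (simp add: pairs_min_canon_H_zero_eigvecs_eq)
qed

end
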